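(* For every $n\ge 2$, $f(n,0)=(n-2)!$.
   Context: A complete non-ambiguous matrix (CNM) of size $n$ is an $n\times n$ matrix $M=(m_{i,j})$ with entries in $\{0,1\}$ whose support $T=\{(i,j): m_{i,j}=1\}$ (whose elements are called vertices) satisfies: (1) $(1,1)\in T$; (2) for every $p=(i,j)\in T$ with $p\neq(1,1)$, exactly one of the following holds: there is $(i',j)\in T$ with $i'<i$, or there is $(i,j')\in T$ with $j'<j$; (3) every row and every column of $M$ contains at least one vertex; (4) define the parent of $p=(i,j)\neq(1,1)$ to be $(i',j)$ with $i'<i$ maximal if such a vertex exists, and otherwise $(i,j')$ with $j'<j$ maximal; then every vertex is the parent of either zero or exactly two vertices. A vertex with no children is a leaf. A CNM of size $n$ is upper-diagonal if its leaves are exactly the positions $(i,n+1-i)$, $1\le i\le n$. For $n\ge 2$ and $0\le k\le n-2$, $f(n,k)$ is the number of upper-diagonal CNMs $M$ of size $n$ with $m_{i,n-i}=0$ for $1\le i\le k$ and $m_{k+1,n-k-1}=1$; $f(n,n-1)$ is the number of upper-diagonal CNMs of size $n$ with $m_{i,n-i}=0$ for all $1\le i\le n-1$; by convention $f(n,-1)=0$. *)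

theory Defs
  imports Main
begin

text \<open>A 0/1 matrix of size n with rows/columns indexed by 1..n is represented by its
support T (the set of positions (i,j) with entry 1).\<close>

definition cnm_parent :: "(nat \<times> nat) set \<Rightarrow> nat \<times> nat \<Rightarrow> nat \<times> nat" where
  "cnm_parent T p = (let i = fst p; j = snd p in
     if (\<exists>i'. i' < i \<and> (i', j) \<in> T)
     then (GREATEST i'. i' < i \<and> (i', j) \<in> T, j)
     else (i, GREATEST j'. j' < j \<and> (i, j') \<in> T))"

definition cnm_children :: "(nat \<times> nat) set \<Rightarrow> nat \<times> nat \<Rightarrow> (nat \<times> nat) set" where
  "cnm_children T p = {q \<in> T. q \<noteq> (1,1) \<and> cnm_parent T q = p}"

definition is_cnm :: "nat \<Rightarrow> (nat \<times> nat) set \<Rightarrow> bool" where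
  "is_cnm n T \<longleftrightarrow>
     T \<subseteq> {1..n} \<times> {1..n} \<and>
     (1, 1) \<in> T \<and>
     (\<forall>(i, j) \<in> T. (i, j) \<noteq> (1, 1) \<longrightarrow>
        ((\<exists>i'. i' < i \<and> (i', j) \<in> T) \<noteq> (\<exists>j'. j' < j \<and> (i, j') \<in> T))) \<and>
     (\<forall>i \<in> {1..n}. \<exists>j. (i, j) \<in> T) \<and>
     (\<forall>j \<in> {1..n}. \<exists>i. (i, j) \<in> T) \<and>
     (\<forall>p \<in> T. card (cnm_children T p) = 0 \<or> card (cnm_children T p) = 2)"

definition cnm_leaves :: "(nat \<times> nat) set \<Rightarrow> (nat \<times> nat) set" where
  "cnm_leaves T = {p \<in> T. cnm_children T p = {}}"

definition upper_diagonal_cnm :: "nat \<Rightarrow> (nat \<times> nat) set \<Rightarrow> bool" where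
  "upper_diagonal_cnm n T \<longleftrightarrow> is_cnm n T \<and>
     cnm_leaves T = {(i, n + 1 - i) | i. 1 \<le> i \<and> i \<le> n}"

text \<open>f n k for 0 \<le> k \<le> n-2 and k = n-1 (the convention f(n,-1)=0 is not needed
as k is a natural number here; values for k \<ge> n are set to 0).\<close>
definition f_cnm :: "nat \<Rightarrow> nat \<Rightarrow> nat" where
  "f_cnm n k =
     (if k + 2 \<le> n then
        card {T. upper_diagonal_cnm n T \<and> (\<forall>i \<in> {1..k}. (i, n - i) \<notin> T)
                 \<and> (k + 1, n - k - 1) \<in> T}
      else if k + 1 = n then
        card {T. upper_diagonal_cnm n T \<and> (\<forall>i \<in> {1..n-1}. (i, n - i) \<notin> T)}
      else 0)"

end

theory Submission
  imports Defs "HOL-Library.FuncSet"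
begin

text \<open>An upper-diagonal CNM is the same thing as a staircase: a set of cells of the
  \<open>n \<times> n\<close> grid that contains \<open>(1, 1)\<close> and the whole anti-diagonal, lies on or above the
  anti-diagonal, and in which every vertex other than \<open>(1, 1)\<close> has another vertex above it
  or to its left, but not both. For \<open>b \<ge> 2\<close> the nearest vertex above the leftmost vertex of
  row \<open>b\<close> lies in a row \<open>P b < b\<close>, so \<open>P\<close> is the parent function of an increasing tree on
  \<open>{1..n}\<close>. Conversely the tree determines the matrix: row \<open>a\<close> has its vertices exactly in
  the columns \<open>n + 1 - m\<close>, where \<open>m\<close> is \<open>a\<close> itself or the largest label in the subtree of a
  child of \<open>a\<close>. Under this bijection the vertex \<open>(1, n - 1)\<close> is present exactly when \<open>2\<close> has
  no children, so \<open>f(n, 0)\<close> counts the functions with \<open>P b \<in> {1..b-1} - {2}\<close>, of which there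
  are \<open>1 \<cdot> 1 \<cdot> 2 \<cdots> (n - 2) = (n - 2)!\<close>.\<close>

lemma Greatest_less_nat:
  fixes x k :: nat
  assumes "k < x" "Q k"
  shows "(GREATEST a. a < x \<and> Q a) < x" "Q (GREATEST a. a < x \<and> Q a)"
    and "\<And>a. a < x \<Longrightarrow> Q a \<Longrightarrow> a \<le> (GREATEST a. a < x \<and> Q a)"
proof -
  have "(\<lambda>a. a < x \<and> Q a) (GREATEST a. a < x \<and> Q a)"
    by (rule GreatestI_nat[of _ k x]) (use assms in auto)
  then show "(GREATEST a. a < x \<and> Q a) < x" "Q (GREATEST a. a < x \<and> Q a)" by auto
  fix a assume "a < x" "Q a"
  then show "a \<le> (GREATEST a. a < x \<and> Q a)"
    by (intro Greatest_le_nat[of _ a x]) auto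
qed

lemma obtain_least_greater:
  fixes i k :: nat
  assumes "i < k" "Q k"
  obtains x where "i < x" "Q x" "\<And>x'. i < x' \<Longrightarrow> x' < x \<Longrightarrow> \<not> Q x'"
proof -
  define x where "x = (LEAST x. i < x \<and> Q x)"
  have "i < x \<and> Q x" unfolding x_def by (rule LeastI[of _ k]) (use assms in auto)
  moreover have "\<not> Q x'" if "i < x'" "x' < x" for x'
    using not_less_Least[of x' "\<lambda>x. i < x \<and> Q x"] that unfolding x_def by auto
  ultimately show thesis using that by blast
qed

lemma least_greater_unique:
  fixes i x y :: nat
  assumes "i < x" "Q x" "\<And>x'. i < x' \<Longrightarrow> x' < x \<Longrightarrow> \<not> Q x'"
    and "i < y" "Q y" "\<And>y'. i < y' \<Longrightarrow> y' < y \<Longrightarrow> \<not> Q y'"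
  shows "x = y"
  using assms by (metis linorder_neqE_nat)

section \<open>Upper-diagonal CNMs as staircases\<close>

definition cnm_exclusive :: "(nat \<times> nat) set \<Rightarrow> bool" where
  "cnm_exclusive T \<longleftrightarrow> (\<forall>(i, j) \<in> T. (i, j) \<noteq> (1, 1) \<longrightarrow>
     ((\<exists>i'. i' < i \<and> (i', j) \<in> T) \<noteq> (\<exists>j'. j' < j \<and> (i, j') \<in> T)))"

lemma cnm_exclusiveI:
  assumes "\<And>i j. (i, j) \<in> T \<Longrightarrow> (i, j) \<noteq> (1, 1) \<Longrightarrow>
    (\<exists>i'. i' < i \<and> (i', j) \<in> T) \<noteq> (\<exists>j'. j' < j \<and> (i, j') \<in> T)"
  shows "cnm_exclusive T"
  using assms unfolding cnm_exclusive_def by blast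

lemma cnm_exclusiveD:
  assumes "cnm_exclusive T" "(i, j) \<in> T" "(i, j) \<noteq> (1, 1)"
  shows "(\<exists>i'. i' < i \<and> (i', j) \<in> T) \<longleftrightarrow> \<not> (\<exists>j'. j' < j \<and> (i, j') \<in> T)"
  using assms unfolding cnm_exclusive_def by fastforce

lemma cnm_parent_sum_less:
  assumes "cnm_exclusive T" "q \<in> T" "q \<noteq> (1, 1)"
  shows "fst (cnm_parent T q) + snd (cnm_parent T q) < fst q + snd q"
proof -
  obtain x y where q: "q = (x, y)" by force
  show ?thesis
  proof (cases "\<exists>i'. i' < x \<and> (i', y) \<in> T")
    case True
    then obtain k where "k < x" "(k, y) \<in> T" by auto
    from Greatest_less_nat(1)[of k x "\<lambda>a. (a, y) \<in> T", OF this] True show ?thesis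
      unfolding q cnm_parent_def by (simp add: Let_def)
  next
    case False
    with cnm_exclusiveD[OF assms[unfolded q]] obtain k where "k < y" "(x, k) \<in> T" by auto
    from Greatest_less_nat(1)[of k y "\<lambda>a. (x, a) \<in> T", OF this] False show ?thesis
      unfolding q cnm_parent_def by (auto simp: Let_def)
  qed
qed

lemma cnm_parent_below:
  assumes "(i, j) \<in> T" "i < x" "\<And>x'. i < x' \<Longrightarrow> x' < x \<Longrightarrow> (x', j) \<notin> T"
  shows "cnm_parent T (x, j) = (i, j)"
proof -
  have "(GREATEST a. a < x \<and> (a, j) \<in> T) = i"
    by (rule Greatest_equality) (use assms leI in blast)+
  then show ?thesis using assms unfolding cnm_parent_def by (auto simp: Let_def)
qed

lemma cnm_parent_right:
  assumes "cnm_exclusive T" "(i, j) \<in> T" "(i, y) \<in> T" "0 < j" "j < y"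
    and "\<And>y'. j < y' \<Longrightarrow> y' < y \<Longrightarrow> (i, y') \<notin> T"
  shows "cnm_parent T (i, y) = (i, j)"
proof -
  have "\<not> (\<exists>i'. i' < i \<and> (i', y) \<in> T)"
    using cnm_exclusiveD[OF assms(1,3)] assms(2,4,5) by auto
  moreover have "(GREATEST a. a < y \<and> (i, a) \<in> T) = j"
    by (rule Greatest_equality) (use assms leI in blast)+
  ultimately show ?thesis unfolding cnm_parent_def by (auto simp: Let_def)
qed

lemma cnm_children_cases:
  assumes "cnm_exclusive T" "q \<in> cnm_children T (i, j)"
  obtains (below) x where "q = (x, j)" "i < x" "\<And>x'. i < x' \<Longrightarrow> x' < x \<Longrightarrow> (x', j) \<notin> T"
    | (right) y where "q = (i, y)" "j < y" "\<And>y'. j < y' \<Longrightarrow> y' < y \<Longrightarrow> (i, y') \<notin> T"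
proof -
  obtain x y where q: "q = (x, y)" "(x, y) \<in> T" "(x, y) \<noteq> (1, 1)" "cnm_parent T (x, y) = (i, j)"
    using assms(2) unfolding cnm_children_def by (cases q) auto
  show thesis
  proof (cases "\<exists>i'. i' < x \<and> (i', y) \<in> T")
    case True
    then obtain k where k: "k < x" "(k, y) \<in> T" by auto
    have e: "y = j" "(GREATEST a. a < x \<and> (a, y) \<in> T) = i"
      using q(4) True unfolding cnm_parent_def by (auto simp: Let_def)
    note g = Greatest_less_nat[of k x "\<lambda>a. (a, y) \<in> T", OF k, unfolded e]
    show thesis by (rule below[of x]) (use q e g in force)+
  next
    case False
    with cnm_exclusiveD[OF assms(1) q(2,3)] obtain k where k: "k < y" "(x, k) \<in> T" by auto
    have e: "x = i" "(GREATEST a. a < y \<and> (x, a) \<in> T) = j"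
      using q(4) False unfolding cnm_parent_def by (auto simp: Let_def)
    note g = Greatest_less_nat[of k y "\<lambda>a. (x, a) \<in> T", OF k, unfolded e]
    show thesis by (rule right[of y]) (use q e g in force)+
  qed
qed

locale staircase =
  fixes n :: nat and T :: "(nat \<times> nat) set"
  assumes subset_square: "T \<subseteq> {1..n} \<times> {1..n}"
    and root_in: "(1, 1) \<in> T"
    and exclusive: "cnm_exclusive T"
    and antidiagonal_in: "\<And>i. i \<in> {1..n} \<Longrightarrow> (i, Suc n - i) \<in> T"
    and on_or_above_antidiagonal: "\<And>i j. (i, j) \<in> T \<Longrightarrow> i + j \<le> Suc n"
begin

lemma antidiagonal_in_column:
  assumes "j \<in> {1..n}"
  shows "(Suc n - j, j) \<in> T"
proof -
  have "Suc n - j \<in> {1..n}" "Suc n - (Suc n - j) = j" using assms by auto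
  then show ?thesis using antidiagonal_in[of "Suc n - j"] by simp
qed

lemma children_antidiagonal:
  assumes "i + j = Suc n"
  shows "cnm_children T (i, j) = {}"
proof (rule ccontr)
  assume "cnm_children T (i, j) \<noteq> {}"
  then obtain q where q: "q \<in> T" "q \<noteq> (1, 1)" "cnm_parent T q = (i, j)"
    unfolding cnm_children_def by auto
  from cnm_parent_sum_less[OF exclusive q(1,2)] q(3) on_or_above_antidiagonal[of "fst q" "snd q"] q(1)
  show False using assms by simp
qed

lemma card_children_interior:
  assumes ij: "(i, j) \<in> T" "i + j < Suc n"
  shows "card (cnm_children T (i, j)) = 2"
proof -
  have ij1: "1 \<le> i" "1 \<le> j" "i \<le> n" "j \<le> n" using subset_square ij by auto
  have "i < Suc n - j" "(Suc n - j, j) \<in> T"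
    using antidiagonal_in_column[of j] ij ij1 by auto
  then obtain d where d: "i < d" "(d, j) \<in> T" "\<And>x'. i < x' \<Longrightarrow> x' < d \<Longrightarrow> (x', j) \<notin> T"
    by (rule obtain_least_greater[where Q = "\<lambda>x. (x, j) \<in> T"]) blast
  have "j < Suc n - i" "(i, Suc n - i) \<in> T"
    using antidiagonal_in[of i] ij ij1 by auto
  then obtain r where r: "j < r" "(i, r) \<in> T" "\<And>y'. j < y' \<Longrightarrow> y' < r \<Longrightarrow> (i, y') \<notin> T"
    by (rule obtain_least_greater[where Q = "\<lambda>y. (i, y) \<in> T"]) blast
  have "cnm_children T (i, j) = {(d, j), (i, r)}"
  proof
    have "cnm_parent T (d, j) = (i, j)" by (rule cnm_parent_below) (use ij d in auto)
    moreover have "cnm_parent T (i, r) = (i, j)"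
      by (rule cnm_parent_right[OF exclusive]) (use ij ij1 r in auto)
    ultimately show "{(d, j), (i, r)} \<subseteq> cnm_children T (i, j)"
      using d r ij1 unfolding cnm_children_def by auto
  next
    show "cnm_children T (i, j) \<subseteq> {(d, j), (i, r)}"
    proof
      fix q assume q: "q \<in> cnm_children T (i, j)"
      then have "q \<in> T" unfolding cnm_children_def by simp
      from exclusive q show "q \<in> {(d, j), (i, r)}"
      proof (cases rule: cnm_children_cases)
        case (below x)
        then have "x = d" using \<open>q \<in> T\<close> d by (intro least_greater_unique[where Q = "\<lambda>x. (x, j) \<in> T"]) auto
        then show ?thesis using below by simp
      next
        case (right y)
        then have "y = r" using \<open>q \<in> T\<close> r by (intro least_greater_unique[where Q = "\<lambda>y. (i, y) \<in> T"]) auto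
        then show ?thesis using right by simp
      qed
    qed
  qed
  then show ?thesis using d(1) by auto
qed

lemma upper_diagonal: "upper_diagonal_cnm n T"
proof -
  have leaves: "cnm_leaves T = {(i, n + 1 - i) | i. 1 \<le> i \<and> i \<le> n}"
  proof
    show "cnm_leaves T \<subseteq> {(i, n + 1 - i) | i. 1 \<le> i \<and> i \<le> n}"
    proof
      fix p assume p: "p \<in> cnm_leaves T"
      obtain i j where pij: "p = (i, j)" by force
      have "(i, j) \<in> T" "cnm_children T (i, j) = {}" using p pij unfolding cnm_leaves_def by auto
      then have "\<not> i + j < Suc n" using card_children_interior by fastforce
      then show "p \<in> {(i, n + 1 - i) | i. 1 \<le> i \<and> i \<le> n}"
        using on_or_above_antidiagonal[of i j] subset_square pij \<open>(i, j) \<in> T\<close> by force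
    qed
    show "{(i, n + 1 - i) | i. 1 \<le> i \<and> i \<le> n} \<subseteq> cnm_leaves T"
      using antidiagonal_in children_antidiagonal unfolding cnm_leaves_def by fastforce
  qed
  have rows: "\<forall>i \<in> {1..n}. \<exists>j. (i, j) \<in> T" using antidiagonal_in by blast
  have columns: "\<forall>j \<in> {1..n}. \<exists>i. (i, j) \<in> T" using antidiagonal_in_column by blast
  have "card (cnm_children T (i, j)) = 0 \<or> card (cnm_children T (i, j)) = 2"
    if "(i, j) \<in> T" for i j
    using that on_or_above_antidiagonal[of i j] children_antidiagonal card_children_interior
    by (cases "i + j = Suc n") auto
  then have degrees: "\<forall>p \<in> T. card (cnm_children T p) = 0 \<or> card (cnm_children T p) = 2"
    by fastforce
  have "is_cnm n T"
    unfolding is_cnm_def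
    by (intro conjI)
      (fact subset_square root_in exclusive[unfolded cnm_exclusive_def] rows columns degrees)+
  then show ?thesis using leaves unfolding upper_diagonal_cnm_def by auto
qed

end

lemma upper_diagonal_cnm_imp_staircase:
  assumes "upper_diagonal_cnm n T"
  shows "staircase n T"
proof -
  have cnm: "is_cnm n T" and leaves: "cnm_leaves T = {(i, n + 1 - i) | i. 1 \<le> i \<and> i \<le> n}"
    using assms unfolding upper_diagonal_cnm_def by simp_all
  have sub: "T \<subseteq> {1..n} \<times> {1..n}" and root: "(1, 1) \<in> T" and ex: "cnm_exclusive T"
    using cnm unfolding is_cnm_def cnm_exclusive_def by blast+
  have anti: "(i, Suc n - i) \<in> T" if "i \<in> {1..n}" for i
    using that leaves unfolding cnm_leaves_def by auto
  have fin: "finite T" using sub by (rule finite_subset) auto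
  define s where "s = Max ((\<lambda>p. fst p + snd p) ` T)"
  have smax: "fst q + snd q \<le> s" if "q \<in> T" for q using fin that unfolding s_def by auto
  have "s \<in> (\<lambda>p. fst p + snd p) ` T" unfolding s_def using fin root by (intro Max_in) auto
  then obtain p where p: "p \<in> T" "fst p + snd p = s" by auto
  \<comment> \<open>a vertex of maximal coordinate sum has no children, so it is an anti-diagonal leaf\<close>
  have "cnm_children T p = {}"
  proof (rule ccontr)
    assume "cnm_children T p \<noteq> {}"
    then obtain q where q: "q \<in> T" "q \<noteq> (1, 1)" "cnm_parent T q = p"
      unfolding cnm_children_def by auto
    from cnm_parent_sum_less[OF ex q(1,2)] q(3) smax[OF q(1)] p show False by simp
  qed
  then have "p \<in> cnm_leaves T" using p unfolding cnm_leaves_def by auto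
  then have "s = Suc n" using p leaves by auto
  then have "i + j \<le> Suc n" if "(i, j) \<in> T" for i j using smax[OF that] by simp
  then show ?thesis using sub root ex anti by unfold_locales
qed

lemma upper_diagonal_cnm_iff_staircase: "upper_diagonal_cnm n T \<longleftrightarrow> staircase n T"
  using upper_diagonal_cnm_imp_staircase staircase.upper_diagonal by blast

section \<open>The matrix of an increasing tree\<close>

inductive descendant :: "(nat \<Rightarrow> nat) \<Rightarrow> nat \<Rightarrow> nat \<Rightarrow> nat \<Rightarrow> bool" for P n where
  descendant_refl: "descendant P n d d"
| descendant_step: "2 \<le> d \<Longrightarrow> d \<le> n \<Longrightarrow> descendant P n b (P d) \<Longrightarrow> descendant P n b d"

definition max_descendant :: "(nat \<Rightarrow> nat) \<Rightarrow> nat \<Rightarrow> nat \<Rightarrow> nat" where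
  "max_descendant P n b = Max {d \<in> {1..n}. descendant P n b d}"

text \<open>Row \<open>a\<close> of the matrix of a tree has its vertices in the columns \<open>n + 1 - m\<close> for
  \<open>m \<in> row_ends P n a\<close>: \<open>m = a\<close> gives the anti-diagonal leaf, and every child \<open>b\<close> of \<open>a\<close>
  contributes the largest label of its subtree.\<close>

definition row_ends :: "(nat \<Rightarrow> nat) \<Rightarrow> nat \<Rightarrow> nat \<Rightarrow> nat set" where
  "row_ends P n a = insert a {max_descendant P n b | b. b \<in> {2..n} \<and> P b = a}"

definition tree_cnm :: "(nat \<Rightarrow> nat) \<Rightarrow> nat \<Rightarrow> (nat \<times> nat) set" where
  "tree_cnm P n = {(a, Suc n - m) | a m. a \<in> {1..n} \<and> m \<in> row_ends P n a}"

locale increasing_tree =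
  fixes P :: "nat \<Rightarrow> nat" and n :: nat
  assumes n_pos: "1 \<le> n"
    and parent_range: "\<And>b. b \<in> {2..n} \<Longrightarrow> 1 \<le> P b \<and> P b < b"
begin

abbreviation "desc \<equiv> descendant P n"
abbreviation "maxdesc \<equiv> max_descendant P n"
abbreviation "ends \<equiv> row_ends P n"

lemma descendant_le: "desc b d \<Longrightarrow> b \<le> d"
  by (induction rule: descendant.induct) (use parent_range in force)+

lemma descendant_trans: "desc b c \<Longrightarrow> desc a b \<Longrightarrow> desc a c"
  by (induction rule: descendant.induct) (auto intro: descendant_step)

lemma descendant_of_root: "d \<in> {1..n} \<Longrightarrow> desc 1 d"
proof (induction d rule: less_induct)
  case (less d)
  show ?case
  proof (cases "d = 1")
    case True then show ?thesis by (simp add: descendant_refl)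
  next
    case False
    then have d: "2 \<le> d" "d \<le> n" using less by auto
    then have "desc 1 (P d)" using less parent_range[of d] by auto
    then show ?thesis using d by (rule descendant_step[rotated 2])
  qed
qed

lemma descendant_parent: "b \<in> {2..n} \<Longrightarrow> desc (P b) b"
  by (rule descendant_step) (auto intro: descendant_refl)

lemma descendant_via_child:
  "desc a d \<Longrightarrow> a \<noteq> d \<Longrightarrow> \<exists>c. c \<in> {2..n} \<and> P c = a \<and> desc c d"
proof (induction rule: descendant.induct)
  case (descendant_refl d) then show ?case by simp
next
  case (descendant_step d b)
  show ?case
  proof (cases "b = P d")
    case True then show ?thesis using descendant_step by (auto intro: descendant_refl)
  next
    case False
    then obtain c where "c \<in> {2..n}" "P c = b" "desc c (P d)" using descendant_step by auto
    then show ?thesis using descendant_step by (auto intro: descendant.descendant_step)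
  qed
qed

lemma descendant_parentD: "desc b d \<Longrightarrow> b \<noteq> d \<Longrightarrow> 2 \<le> d \<and> d \<le> n \<and> desc b (P d)"
  by (induction rule: descendant.induct) auto

lemma descendant_linear: "desc b m \<Longrightarrow> desc b' m \<Longrightarrow> desc b b' \<or> desc b' b"
proof (induction arbitrary: b' rule: descendant.induct)
  case (descendant_refl d) then show ?case by simp
next
  case (descendant_step d b)
  show ?case
  proof (cases "b' = d")
    case True then show ?thesis using descendant_step by (auto intro: descendant.descendant_step)
  next
    case False
    then have "desc b' (P d)" using descendant_parentD[of b' d] descendant_step.prems by simp
    then show ?thesis using descendant_step by blast
  qed
qed

lemma
  assumes "b \<in> {1..n}"
  shows max_descendant_range: "maxdesc b \<in> {1..n}"
    and descendant_max_descendant: "desc b (maxdesc b)"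
    and le_max_descendant: "b \<le> maxdesc b"
    and descendant_le_max_descendant: "\<And>d. desc b d \<Longrightarrow> d \<le> n \<Longrightarrow> d \<le> maxdesc b"
proof -
  let ?D = "{d \<in> {1..n}. desc b d}"
  have b: "b \<in> ?D" using assms by (auto intro: descendant_refl)
  have "maxdesc b \<in> ?D" unfolding max_descendant_def using b by (intro Max_in) auto
  then show "maxdesc b \<in> {1..n}" "desc b (maxdesc b)" by auto
  show "b \<le> maxdesc b" unfolding max_descendant_def using b by (intro Max_ge) auto
  fix d assume "desc b d" "d \<le> n"
  moreover have "1 \<le> d" using descendant_le[OF \<open>desc b d\<close>] assms by auto
  ultimately show "d \<le> maxdesc b" unfolding max_descendant_def by (intro Max_ge) auto
qed

lemma max_descendant_antimono:
  "desc a b \<Longrightarrow> a \<in> {1..n} \<Longrightarrow> b \<in> {1..n} \<Longrightarrow> maxdesc b \<le> maxdesc a"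
  using max_descendant_range[of b] descendant_max_descendant[of b]
    descendant_le_max_descendant[of a "maxdesc b"] descendant_trans by auto

lemma max_descendant_root: "maxdesc 1 = n"
  using descendant_le_max_descendant[of 1 n] descendant_of_root[of n] max_descendant_range[of 1] n_pos
  by auto

lemma max_descendant_leaf: "a \<in> {1..n} \<Longrightarrow> \<forall>c \<in> {2..n}. P c \<noteq> a \<Longrightarrow> maxdesc a = a"
  using descendant_max_descendant[of a] descendant_via_child[of a "maxdesc a"] by metis

lemma max_descendant_in_row_ends:
  assumes "a \<in> {1..n}"
  shows "maxdesc a \<in> ends a"
proof (cases "maxdesc a = a")
  case True then show ?thesis unfolding row_ends_def by simp
next
  case False
  from descendant_via_child[OF descendant_max_descendant[OF assms]] False
  obtain c where c: "c \<in> {2..n}" "P c = a" "desc c (maxdesc a)" by auto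
  have "maxdesc a \<le> maxdesc c"
    using descendant_le_max_descendant[of c "maxdesc a"] c max_descendant_range[OF assms] by auto
  moreover have "maxdesc c \<le> maxdesc a"
    using max_descendant_antimono[of a c] c assms descendant_parent[of c] by auto
  ultimately have "maxdesc a = maxdesc c" by simp
  then show ?thesis unfolding row_ends_def using c by auto
qed

lemma row_ends_bounds:
  assumes "a \<in> {1..n}" "m \<in> ends a"
  shows "a \<le> m" "m \<le> maxdesc a" "m \<le> n"
proof -
  have "a \<le> m \<and> m \<le> maxdesc a"
  proof (cases "m = a")
    case True then show ?thesis using le_max_descendant[OF assms(1)] by simp
  next
    case False
    then obtain b where b: "b \<in> {2..n}" "P b = a" "m = maxdesc b"
      using assms(2) unfolding row_ends_def by auto
    have "a < b" using parent_range b by auto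
    moreover have "b \<le> maxdesc b" using le_max_descendant[of b] b by auto
    moreover have "maxdesc b \<le> maxdesc a"
      using max_descendant_antimono[of a b] b assms descendant_parent[of b] by auto
    ultimately show ?thesis using b by simp
  qed
  then show "a \<le> m" "m \<le> maxdesc a" by auto
  then show "m \<le> n" using max_descendant_range[OF assms(1)] by auto
qed

lemma mem_tree_cnm_iff:
  "(i, j) \<in> tree_cnm P n \<longleftrightarrow> i \<in> {1..n} \<and> j \<in> {1..n} \<and> Suc n - j \<in> ends i"
proof
  assume "(i, j) \<in> tree_cnm P n"
  then obtain m where m: "i \<in> {1..n}" "m \<in> ends i" "j = Suc n - m"
    unfolding tree_cnm_def by auto
  then show "i \<in> {1..n} \<and> j \<in> {1..n} \<and> Suc n - j \<in> ends i"
    using row_ends_bounds[OF m(1,2)] by auto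
next
  assume a: "i \<in> {1..n} \<and> j \<in> {1..n} \<and> Suc n - j \<in> ends i"
  then have "j = Suc n - (Suc n - j)" by auto
  then show "(i, j) \<in> tree_cnm P n" unfolding tree_cnm_def using a by blast
qed

lemma row_ends_shared_iff:
  assumes i: "i \<in> {1..n}" and m: "m \<in> ends i"
  shows "(\<exists>i'. 1 \<le> i' \<and> i' < i \<and> m \<in> ends i') \<longleftrightarrow> 2 \<le> i \<and> maxdesc i = m"
proof
  assume "2 \<le> i \<and> maxdesc i = m"
  then have "i \<in> {2..n}" "maxdesc i = m" using i by auto
  moreover from this have "m \<in> ends (P i)" unfolding row_ends_def by auto
  ultimately show "\<exists>i'. 1 \<le> i' \<and> i' < i \<and> m \<in> ends i'" using parent_range by blast
next
  assume "\<exists>i'. 1 \<le> i' \<and> i' < i \<and> m \<in> ends i'"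
  then obtain i' where i': "1 \<le> i'" "i' < i" "m \<in> ends i'" by auto
  have "m \<noteq> i'" using row_ends_bounds(1)[OF i m] i' by simp
  then obtain b' where b': "b' \<in> {2..n}" "P b' = i'" "m = maxdesc b'"
    using i'(3) unfolding row_ends_def by auto
  have b'm: "desc b' m" using descendant_max_descendant[of b'] b' by auto
  \<comment> \<open>the subtrees of \<open>b'\<close> and of the child of \<open>i\<close> ending at \<open>m\<close> are nested, and \<open>P b' < i\<close>\<close>
  have "desc b' i"
  proof (cases "m = i")
    case True then show ?thesis using b'm by simp
  next
    case False
    then obtain b where b: "b \<in> {2..n}" "P b = i" "m = maxdesc b"
      using m unfolding row_ends_def by auto
    have bm: "desc b m" using descendant_max_descendant[of b] b by auto
    have "b \<noteq> b'" using b b' i' by auto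
    from descendant_linear[OF bm b'm] show ?thesis
    proof
      assume "desc b b'"
      then have "desc b (P b')" using descendant_parentD \<open>b \<noteq> b'\<close> by blast
      then have "b \<le> i'" using descendant_le b' by auto
      then show ?thesis using parent_range[OF b(1)] b(2) i' by simp
    next
      assume "desc b' b"
      then show "desc b' i" using descendant_parentD \<open>b \<noteq> b'\<close> b by blast
    qed
  qed
  then have "maxdesc i \<le> maxdesc b'" using max_descendant_antimono[of b' i] b' i by auto
  then have "maxdesc i = m" using row_ends_bounds(2)[OF i m] b' by simp
  then show "2 \<le> i \<and> maxdesc i = m" using i' by simp
qed

lemma row_ends_greater_iff:
  assumes i: "i \<in> {1..n}" and m: "m \<in> ends i"
  shows "(\<exists>m'. m < m' \<and> m' \<le> n \<and> m' \<in> ends i) \<longleftrightarrow> m < maxdesc i"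
  using row_ends_bounds(2)[OF i] max_descendant_in_row_ends[OF i] max_descendant_range[OF i]
  by fastforce

lemma tree_cnm_exclusive: "cnm_exclusive (tree_cnm P n)"
proof (rule cnm_exclusiveI)
  fix i j assume ij: "(i, j) \<in> tree_cnm P n" "(i, j) \<noteq> (1, 1)"
  define m where "m = Suc n - j"
  have i: "i \<in> {1..n}" and j: "j \<in> {1..n}" and m: "m \<in> ends i"
    using ij(1) mem_tree_cnm_iff unfolding m_def by auto
  have above: "(\<exists>i'. i' < i \<and> (i', j) \<in> tree_cnm P n) \<longleftrightarrow> (\<exists>i'. 1 \<le> i' \<and> i' < i \<and> m \<in> ends i')"
    using mem_tree_cnm_iff j m_def i by auto
  have left: "(\<exists>j'. j' < j \<and> (i, j') \<in> tree_cnm P n) \<longleftrightarrow> (\<exists>m'. m < m' \<and> m' \<le> n \<and> m' \<in> ends i)"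
  proof
    assume "\<exists>j'. j' < j \<and> (i, j') \<in> tree_cnm P n"
    then obtain j' where "j' < j" "(i, j') \<in> tree_cnm P n" by auto
    then show "\<exists>m'. m < m' \<and> m' \<le> n \<and> m' \<in> ends i" using mem_tree_cnm_iff m_def j
      by (intro exI[of _ "Suc n - j'"]) auto
  next
    assume "\<exists>m'. m < m' \<and> m' \<le> n \<and> m' \<in> ends i"
    then obtain m' where m': "m < m'" "m' \<le> n" "m' \<in> ends i" by auto
    have "1 \<le> m'" using row_ends_bounds(1)[OF i m'(3)] i by auto
    then have "Suc n - m' < j \<and> (i, Suc n - m') \<in> tree_cnm P n"
      using mem_tree_cnm_iff i m' m_def j by auto
    then show "\<exists>j'. j' < j \<and> (i, j') \<in> tree_cnm P n" by blast
  qed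
  have "i \<noteq> 1" if "maxdesc i = m"
  proof
    assume "i = 1"
    then have "j = 1" using that max_descendant_root m_def j by auto
    then show False using ij(2) \<open>i = 1\<close> by simp
  qed
  then show "(\<exists>i'. i' < i \<and> (i', j) \<in> tree_cnm P n) \<noteq> (\<exists>j'. j' < j \<and> (i, j') \<in> tree_cnm P n)"
    unfolding above left row_ends_shared_iff[OF i m] row_ends_greater_iff[OF i m]
    using row_ends_bounds(2)[OF i m] i by auto
qed

lemma tree_cnm_staircase: "staircase n (tree_cnm P n)"
proof
  show "tree_cnm P n \<subseteq> {1..n} \<times> {1..n}" using mem_tree_cnm_iff by auto
  show "(1, 1) \<in> tree_cnm P n"
    using mem_tree_cnm_iff max_descendant_in_row_ends[of 1] max_descendant_root n_pos by auto
  show "cnm_exclusive (tree_cnm P n)" by (rule tree_cnm_exclusive)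
  show "(i, Suc n - i) \<in> tree_cnm P n" if "i \<in> {1..n}" for i
    using that mem_tree_cnm_iff unfolding row_ends_def by auto
  show "i + j \<le> Suc n" if "(i, j) \<in> tree_cnm P n" for i j
    using that mem_tree_cnm_iff row_ends_bounds(1)[of i "Suc n - j"] by auto
qed

lemma corner_in_tree_cnm:
  assumes "2 \<le> n" "\<forall>c \<in> {2..n}. P c \<noteq> 2"
  shows "(1, n - 1) \<in> tree_cnm P n"
proof -
  have "P 2 = 1" "maxdesc 2 = 2"
    using parent_range[of 2] max_descendant_leaf[of 2] assms by auto
  then have "Suc n - (n - 1) \<in> ends 1"
    using assms(1) unfolding row_ends_def by (auto intro!: exI[of _ 2])
  then show ?thesis using mem_tree_cnm_iff assms(1) by auto
qed

end

section \<open>Recovering the tree from the matrix\<close>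

definition row_head :: "(nat \<times> nat) set \<Rightarrow> nat \<Rightarrow> nat" where
  "row_head T i = (LEAST j. (i, j) \<in> T)"

definition matrix_parent :: "(nat \<times> nat) set \<Rightarrow> nat \<Rightarrow> nat \<Rightarrow> nat" where
  "matrix_parent T n = (\<lambda>b. if b \<in> {2..n} then GREATEST a. a < b \<and> (a, row_head T b) \<in> T
     else undefined)"

context increasing_tree
begin

lemma row_head_tree_cnm:
  assumes b: "b \<in> {1..n}"
  shows "row_head (tree_cnm P n) b = Suc n - maxdesc b"
  unfolding row_head_def
proof (rule Least_equality)
  show "(b, Suc n - maxdesc b) \<in> tree_cnm P n"
    using mem_tree_cnm_iff b max_descendant_range[OF b] max_descendant_in_row_ends[OF b] by auto
  fix j assume "(b, j) \<in> tree_cnm P n"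
  then have "j \<in> {1..n}" "Suc n - j \<in> ends b" using mem_tree_cnm_iff by auto
  then show "Suc n - maxdesc b \<le> j" using row_ends_bounds(2)[OF b] by fastforce
qed

lemma greatest_above_row_head:
  assumes b: "b \<in> {2..n}"
  shows "(GREATEST a. a < b \<and> (a, Suc n - maxdesc b) \<in> tree_cnm P n) = P b"
proof (rule Greatest_equality)
  have mb: "maxdesc b \<in> {1..n}" "b \<le> maxdesc b" "desc b (maxdesc b)"
    using max_descendant_range[of b] le_max_descendant[of b] descendant_max_descendant[of b] b
    by auto
  have "maxdesc b \<in> ends (P b)" unfolding row_ends_def using b by auto
  then show "P b < b \<and> (P b, Suc n - maxdesc b) \<in> tree_cnm P n"
    using mem_tree_cnm_iff parent_range[OF b] mb b by auto
  fix a assume a: "a < b \<and> (a, Suc n - maxdesc b) \<in> tree_cnm P n"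
  then have "a \<in> {1..n}" "maxdesc b \<in> ends a" using mem_tree_cnm_iff mb by auto
  moreover have "maxdesc b \<noteq> a" using a mb by auto
  ultimately obtain b' where b': "b' \<in> {2..n}" "P b' = a" "maxdesc b = maxdesc b'"
    unfolding row_ends_def by auto
  show "a \<le> P b"
  proof (cases "b = b'")
    case True then show ?thesis using b' by simp
  next
    case False
    have "desc b' (maxdesc b)" using descendant_max_descendant[of b'] b' by auto
    from descendant_linear[OF mb(3) this] show ?thesis
    proof
      assume "desc b b'"
      then have "b \<le> a" using descendant_parentD[of b b'] False descendant_le b' by auto
      then show ?thesis using a by simp
    next
      assume "desc b' b"
      then have "b' \<le> P b" using descendant_parentD[of b' b] False descendant_le by auto
      then show ?thesis using b' parent_range[of b'] by auto
    qed
  qed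
qed

lemma matrix_parent_tree_cnm:
  assumes "P \<in> extensional {2..n}"
  shows "matrix_parent (tree_cnm P n) n = P"
proof
  fix b show "matrix_parent (tree_cnm P n) n b = P b"
  proof (cases "b \<in> {2..n}")
    case True
    then show ?thesis
      unfolding matrix_parent_def using row_head_tree_cnm[of b] greatest_above_row_head[OF True] by auto
  next
    case False
    then show ?thesis unfolding matrix_parent_def using assms by (auto simp: extensional_def)
  qed
qed

end

context staircase
begin

abbreviation "parent \<equiv> matrix_parent T n"

lemma row_head_le: "(i, j) \<in> T \<Longrightarrow> row_head T i \<le> j"
  unfolding row_head_def by (rule Least_le)

lemma row_head_in: "i \<in> {1..n} \<Longrightarrow> (i, row_head T i) \<in> T"
  unfolding row_head_def by (rule LeastI, rule antidiagonal_in)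

lemma row_head_if_vertex_above:
  assumes "(a, c) \<in> T" "(x, c) \<in> T" "a < x"
  shows "row_head T x = c"
proof -
  have "x \<in> {1..n}" "(x, c) \<noteq> (1, 1)" using subset_square assms by auto
  with cnm_exclusiveD[OF exclusive assms(2)] assms have "\<not> (\<exists>j'. j' < c \<and> (x, j') \<in> T)"
    by blast
  then show ?thesis
    using row_head_le[OF assms(2)] row_head_in[OF \<open>x \<in> {1..n}\<close>] le_neq_implies_less by blast
qed

lemma exists_above_row_head:
  assumes b: "b \<in> {2..n}"
  shows "\<exists>a < b. (a, row_head T b) \<in> T"
proof -
  have "(b, row_head T b) \<in> T" "(b, row_head T b) \<noteq> (1, 1)" using row_head_in b by auto
  moreover have "\<not> (\<exists>j'. j' < row_head T b \<and> (b, j') \<in> T)" using row_head_le by fastforce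
  ultimately show ?thesis using cnm_exclusiveD[OF exclusive] by blast
qed

lemma
  assumes b: "b \<in> {2..n}"
  shows matrix_parent_less: "parent b < b"
    and matrix_parent_in: "(parent b, row_head T b) \<in> T"
    and matrix_parent_greatest: "\<And>a. a < b \<Longrightarrow> (a, row_head T b) \<in> T \<Longrightarrow> a \<le> parent b"
proof -
  obtain k where k: "k < b" "(k, row_head T b) \<in> T" using exists_above_row_head[OF b] by auto
  have e: "parent b = (GREATEST a. a < b \<and> (a, row_head T b) \<in> T)"
    unfolding matrix_parent_def using b by simp
  note g = Greatest_less_nat[of k b "\<lambda>a. (a, row_head T b) \<in> T", OF k]
  show "parent b < b" "(parent b, row_head T b) \<in> T" using g(1,2) e by simp_all
  show "a \<le> parent b" if "a < b" "(a, row_head T b) \<in> T" for a using g(3) that e by simp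
qed

sublocale tree: increasing_tree parent n
proof
  show "1 \<le> n" using subset_square root_in by auto
  show "1 \<le> parent b \<and> parent b < b" if "b \<in> {2..n}" for b
    using matrix_parent_less[OF that] matrix_parent_in[OF that] subset_square by auto
qed

lemma row_head_descendant_mono: "descendant parent n b d \<Longrightarrow> row_head T b \<le> row_head T d"
proof (induction rule: descendant.induct)
  case (descendant_refl d) then show ?case by simp
next
  case (descendant_step d b)
  then show ?case using row_head_le matrix_parent_in[of d] by force
qed

lemma descendant_if_same_column:
  assumes b: "b \<in> {1..n}"
  shows "(x, row_head T b) \<in> T \<Longrightarrow> b \<le> x \<Longrightarrow> descendant parent n b x"
proof (induction x rule: less_induct)
  case (less x)
  show ?case
  proof (cases "x = b")
    case True then show ?thesis by (simp add: descendant_refl)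
  next
    case False
    then have bx: "b < x" using less by simp
    have hb: "(b, row_head T b) \<in> T" using row_head_in b by simp
    have hx: "row_head T x = row_head T b" using row_head_if_vertex_above[OF hb less.prems(1) bx] .
    have x: "x \<in> {2..n}" using subset_square less.prems(1) bx b by auto
    \<comment> \<open>the parent of \<open>x\<close> is the nearest vertex above it in the same column, hence not above \<open>b\<close>\<close>
    have "b \<le> parent x" using matrix_parent_greatest[OF x bx] hb hx by simp
    then have "descendant parent n b (parent x)"
      using less.IH[OF matrix_parent_less[OF x]] matrix_parent_in[OF x] hx by simp
    then show ?thesis using descendant_step[where P = parent and d = x] x by auto
  qed
qed

lemma max_descendant_matrix_parent:
  assumes b: "b \<in> {1..n}"
  shows "max_descendant parent n b = Suc n - row_head T b"
proof (rule antisym)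
  let ?l = "max_descendant parent n b"
  have l: "?l \<in> {1..n}" "descendant parent n b ?l"
    using tree.max_descendant_range[OF b] tree.descendant_max_descendant[OF b] by auto
  have "row_head T b \<le> row_head T ?l" using row_head_descendant_mono[OF l(2)] .
  moreover have "?l + row_head T ?l \<le> Suc n" using on_or_above_antidiagonal row_head_in[OF l(1)] by auto
  ultimately show "?l \<le> Suc n - row_head T b" by simp
next
  have hb: "(b, row_head T b) \<in> T" using row_head_in b by simp
  then have c: "row_head T b \<in> {1..n}" using subset_square by auto
  have "descendant parent n b (Suc n - row_head T b)"
    using descendant_if_same_column[OF b] antidiagonal_in_column[OF c] on_or_above_antidiagonal[OF hb]
    by simp
  then show "Suc n - row_head T b \<le> max_descendant parent n b"
    using tree.descendant_le_max_descendant[OF b] c by auto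
qed

lemma tree_cnm_matrix_parent_subset: "tree_cnm parent n \<subseteq> T"
proof clarify
  fix i j assume "(i, j) \<in> tree_cnm parent n"
  then have ij: "i \<in> {1..n}" "j \<in> {1..n}" "Suc n - j \<in> row_ends parent n i"
    using tree.mem_tree_cnm_iff by auto
  show "(i, j) \<in> T"
  proof (cases "Suc n - j = i")
    case True
    then show ?thesis using antidiagonal_in_column[OF ij(2)] by simp
  next
    case False
    then obtain b where b: "b \<in> {2..n}" "parent b = i" "Suc n - j = max_descendant parent n b"
      using ij(3) unfolding row_ends_def by auto
    have "row_head T b \<in> {1..n}" using row_head_in[of b] b subset_square by auto
    then have "j = row_head T b" using max_descendant_matrix_parent[of b] b ij(2) by auto
    then show ?thesis using matrix_parent_in[OF b(1)] b by simp
  qed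
qed

lemma row_end_of_vertex:
  assumes ij: "(i, j) \<in> T"
  shows "Suc n - j \<in> row_ends parent n i"
proof (cases "i + j = Suc n")
  case True then show ?thesis unfolding row_ends_def by auto
next
  case False
  then have "i < Suc n - j" using on_or_above_antidiagonal[OF ij] by auto
  moreover have "(Suc n - j, j) \<in> T" using antidiagonal_in_column ij subset_square by auto
  \<comment> \<open>the nearest vertex below \<open>(i, j)\<close> is the head of a child row of \<open>i\<close>\<close>
  ultimately obtain x where x: "i < x" "(x, j) \<in> T" "\<And>x'. i < x' \<Longrightarrow> x' < x \<Longrightarrow> (x', j) \<notin> T"
    by (rule obtain_least_greater[where Q = "\<lambda>x. (x, j) \<in> T"]) blast
  have hx: "row_head T x = j" using row_head_if_vertex_above[OF ij x(2,1)] .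
  have xr: "x \<in> {2..n}" using x subset_square ij by auto
  have "i \<le> parent x" using matrix_parent_greatest[OF xr x(1)] ij hx by simp
  moreover have "\<not> i < parent x" using x(3) matrix_parent_less[OF xr] matrix_parent_in[OF xr] hx by auto
  ultimately have "parent x = i" by simp
  moreover have "max_descendant parent n x = Suc n - j"
    using max_descendant_matrix_parent[of x] xr hx by auto
  ultimately show ?thesis unfolding row_ends_def using xr by (intro insertI2 CollectI exI[of _ x]) auto
qed

lemma tree_cnm_matrix_parent: "tree_cnm parent n = T"
proof
  show "T \<subseteq> tree_cnm parent n"
    using tree.mem_tree_cnm_iff row_end_of_vertex subset_square by blast
qed (rule tree_cnm_matrix_parent_subset)

lemma matrix_parent_ne_2:
  assumes corner: "(1, n - 1) \<in> T" and b: "b \<in> {2..n}"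
  shows "parent b \<noteq> 2"
proof
  assume h: "parent b = 2"
  have "2 \<le> n" using b by simp
  then have "(2, n - 1) \<in> T" using antidiagonal_in[of 2] by (simp add: numeral_2_eq_2)
  then have "row_head T 2 = n - 1" using row_head_if_vertex_above[OF corner] by simp
  then have "n - 1 \<le> row_head T b" using row_head_le matrix_parent_in[OF b] h by metis
  moreover have "b + row_head T b \<le> Suc n" using on_or_above_antidiagonal row_head_in b by auto
  moreover have "2 < b" using matrix_parent_less[OF b] h by simp
  ultimately show False by simp
qed

end

definition parent_functions_avoiding_2 :: "nat \<Rightarrow> (nat \<Rightarrow> nat) set" where
  "parent_functions_avoiding_2 n = (\<Pi>\<^sub>E b \<in> {2..n}. {1..<b} - {2})"

lemma card_parent_functions_avoiding_2:
  assumes "2 \<le> n"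
  shows "card (parent_functions_avoiding_2 n) = fact (n - 2)"
  using assms
proof (induction n rule: nat_induct_at_least)
  case base
  have "{1..<2::nat} - {2} = {1}" by auto
  then show ?case unfolding parent_functions_avoiding_2_def by (simp add: card_PiE)
next
  case (Suc n)
  have "{2..Suc n} = insert (Suc n) {2..n}" using Suc.hyps by auto
  moreover have "card ({1..<Suc n} - {2}) = n - 1" using Suc.hyps by (simp add: card_Diff_singleton)
  ultimately have "card (parent_functions_avoiding_2 (Suc n))
      = (n - 1) * card (parent_functions_avoiding_2 n)"
    unfolding parent_functions_avoiding_2_def by (simp add: card_PiE)
  also have "\<dots> = fact (Suc n - 2)"
    using Suc by (clarsimp simp: le_iff_add)
  finally show ?case .
qed

lemma increasing_tree_if_avoiding_2:
  assumes "P \<in> parent_functions_avoiding_2 n" "2 \<le> n"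
  shows "increasing_tree P n"
  using assms PiE_mem[of P] unfolding parent_functions_avoiding_2_def
  by unfold_locales fastforce+

lemma bij_betw_tree_cnm:
  assumes n: "2 \<le> n"
  shows "bij_betw (\<lambda>P. tree_cnm P n) (parent_functions_avoiding_2 n)
    {T. upper_diagonal_cnm n T \<and> (1, n - 1) \<in> T}"
proof -
  have tree_side: "matrix_parent (tree_cnm P n) n = P \<and>
      upper_diagonal_cnm n (tree_cnm P n) \<and> (1, n - 1) \<in> tree_cnm P n"
    if P: "P \<in> parent_functions_avoiding_2 n" for P
  proof -
    interpret increasing_tree P n using increasing_tree_if_avoiding_2[OF P n] .
    have avoids_2: "\<forall>c \<in> {2..n}. P c \<noteq> 2" and extensional: "P \<in> extensional {2..n}"
      using P unfolding parent_functions_avoiding_2_def by (auto simp: PiE_def)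
    show ?thesis
      using matrix_parent_tree_cnm[OF extensional] tree_cnm_staircase
        upper_diagonal_cnm_iff_staircase corner_in_tree_cnm[OF n avoids_2] by blast
  qed
  have matrix_side: "tree_cnm (matrix_parent T n) n = T \<and>
      matrix_parent T n \<in> parent_functions_avoiding_2 n"
    if T: "upper_diagonal_cnm n T" "(1, n - 1) \<in> T" for T
  proof -
    interpret staircase n T using T(1) upper_diagonal_cnm_iff_staircase by blast
    have "parent \<in> parent_functions_avoiding_2 n"
      unfolding parent_functions_avoiding_2_def
    proof (rule PiE_I)
      show "parent b \<in> {1..<b} - {2}" if "b \<in> {2..n}" for b
        using tree.parent_range[OF that] matrix_parent_ne_2[OF T(2) that] by auto
      show "parent b = undefined" if "b \<notin> {2..n}" for b
        using that unfolding matrix_parent_def by auto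
    qed
    then show ?thesis using tree_cnm_matrix_parent by blast
  qed
  show ?thesis
    by (rule bij_betw_byWitness[where f' = "\<lambda>T. matrix_parent T n"])
      (use tree_side matrix_side in auto)
qed

theorem lemma4p7:
  fixes n :: nat
  assumes "n \<ge> 2"
  shows "f_cnm n 0 = fact (n - 2)"
proof -
  have "f_cnm n 0 = card {T. upper_diagonal_cnm n T \<and> (1, n - 1) \<in> T}"
    unfolding f_cnm_def using assms by simp
  also have "\<dots> = card (parent_functions_avoiding_2 n)"
    using bij_betw_same_card[OF bij_betw_tree_cnm[OF assms]] by simp
  also have "\<dots> = fact (n - 2)" using card_parent_functions_avoiding_2[OF assms] .
  finally show ?thesis .
qed

end
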